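(* Let $M\in L^1(0,1)$ with $M\ge0$ a.e., and let $$Q=\Big\{u\in\mathcal C^1([0,1]):\ |u'(t)-u'(s)|\le\int_s^tM(r)\,dr\ \text{whenever }0\le s\le t\le1\Big\}.$$ Then $Q$ is closed in $\mathcal C([0,1])$ with the maximum norm topology. Moreover, if $u_n\in Q$ for all $n\in\mathbb N$ and $u_n\to u$ uniformly on $[0,1]$, then some subsequence $\{u_{n_k}\}$ converges to $u$ in the $\mathcal C^1$ norm. *)

theory Defs
  imports "HOL-Analysis.Analysis"
begin

definition C1_on01 :: "(real \<Rightarrow> real) \<Rightarrow> (real \<Rightarrow> real) \<Rightarrow> bool" where
  "C1_on01 u u' \<longleftrightarrow>
     (\<forall>t\<in>{0..1}. (u has_real_derivative u' t) (at t within {0..1})) \<and> continuous_on {0..1} u'"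

definition Qset :: "(real \<Rightarrow> real) \<Rightarrow> (real \<Rightarrow> real) set" where
  "Qset M = {u. \<exists>u'. C1_on01 u u' \<and>
      (\<forall>s t. 0 \<le> s \<and> s \<le> t \<and> t \<le> 1 \<longrightarrow> \<bar>u' t - u' s\<bar> \<le> (LINT r:{s..t}|lborel. M r))}"

(* C([0,1]) with the maximum norm (functions are represented extensionally on [0,1]) *)
definition C01 :: "(real \<Rightarrow> real) metric" where
  "C01 = cfunspace (top_of_set {0..1}) euclidean_metric"

end

theory Submission
  imports Defs "HOL-Complex_Analysis.Great_Picard"
begin

text \<open>
  The derivatives of the functions in \<open>Q\<close> share the modulus of continuity of the
  indefinite integral \<open>F x = \<integral>\<^sub>0\<^sup>x M\<close>, because \<open>\<bar>u' t - u' s\<bar> \<le> \<bar>F t - F s\<bar>\<close>.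
  If \<open>u\<^sub>n \<in> Q\<close> converge uniformly, then \<open>u\<^sub>n 1 - u\<^sub>n 0\<close> is bounded; by the mean value
  theorem every \<open>u\<^sub>n'\<close> takes a bounded value somewhere, so the \<open>u\<^sub>n'\<close> are uniformly
  bounded and equicontinuous.  Arzela-Ascoli gives a uniformly convergent subsequence
  of derivatives, whose limit is the derivative of the limit \<open>u\<close>; passing to the limit in
  the defining inequality shows \<open>u \<in> Q\<close>, hence \<open>Q\<close> is closed.
\<close>

lemma set_integral_Icc_eq_indefinite_integral_diff:
  fixes M :: "real \<Rightarrow> real"
  assumes "set_integrable lborel {a..b} M" "a \<le> s" "s \<le> t" "t \<le> b"
  shows "(LINT r:{s..t}|lborel. M r) = integral {a..t} M - integral {a..s} M"
proof -
  have "set_integrable lborel {s..t} M"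
    by (rule set_integrable_subset[OF assms(1)]) (use assms in auto)
  then have "(LINT r:{s..t}|lborel. M r) = integral {s..t} M"
    by (rule set_borel_integral_eq_integral(2))
  moreover have "M integrable_on {a..t}"
    by (rule integrable_on_subinterval[OF set_borel_integral_eq_integral(1)[OF assms(1)]])
       (use assms in auto)
  then have "integral {a..s} M + integral {s..t} M = integral {a..t} M"
    using Henstock_Kurzweil_Integration.integral_combine[of a s t M] assms by auto
  ultimately show ?thesis by simp
qed

lemma Arzela_Ascoli_common_modulus:
  fixes vs :: "nat \<Rightarrow> 'a::euclidean_space \<Rightarrow> 'b::{real_normed_vector,heine_borel}"
    and F :: "'a \<Rightarrow> 'c::metric_space"
  assumes "compact S" "continuous_on S F"
    and bounded: "\<And>n x. x \<in> S \<Longrightarrow> norm (vs n x) \<le> B"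
    and modulus: "\<And>n x y. x \<in> S \<Longrightarrow> y \<in> S \<Longrightarrow> dist (vs n x) (vs n y) \<le> dist (F x) (F y)"
  obtains k g where "strict_mono k" "continuous_on S g"
    "uniform_limit S (\<lambda>n. vs (k n)) g sequentially"
proof -
  have equicontinuous:
    "\<exists>d. 0 < d \<and> (\<forall>n y. y \<in> S \<and> norm (x - y) < d \<longrightarrow> norm (vs n x - vs n y) < e)"
    if x: "x \<in> S" and e: "0 < e" for x e
  proof -
    obtain d where "d > 0" and d: "\<And>y. y \<in> S \<Longrightarrow> dist y x < d \<Longrightarrow> dist (F y) (F x) < e"
      using continuous_on_iff[THEN iffD1, OF assms(2), rule_format, OF x e] by blast
    have "norm (vs n x - vs n y) < e" if "y \<in> S" "norm (x - y) < d" for n y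
      using modulus[OF x, of y n] d[of y] that by (simp add: dist_norm norm_minus_commute dist_commute)
    then show ?thesis using \<open>d > 0\<close> by blast
  qed
  obtain g and k :: "nat \<Rightarrow> nat" where "continuous_on S g" "strict_mono k"
    "\<And>e. 0 < e \<Longrightarrow> \<exists>N. \<forall>n x. n \<ge> N \<and> x \<in> S \<longrightarrow> norm (vs (k n) x - g x) < e"
    using Arzela_Ascoli[of S vs B, OF assms(1) bounded equicontinuous] by blast
  moreover from this(3) have "uniform_limit S (\<lambda>n. vs (k n)) g sequentially"
    unfolding uniform_limit_sequentially_iff dist_norm by meson
  ultimately show ?thesis using that by blast
qed

lemma has_field_derivative_uniform_limit:
  fixes fs :: "nat \<Rightarrow> 'a::{real_normed_field,banach} \<Rightarrow> 'a"
  assumes "convex S"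
    and derivs: "\<And>n x. x \<in> S \<Longrightarrow> (fs n has_field_derivative fs' n x) (at x within S)"
    and "uniform_limit S fs' g' sequentially"
    and pointwise: "\<And>x. x \<in> S \<Longrightarrow> (\<lambda>n. fs n x) \<longlonglongrightarrow> g x"
    and "x \<in> S"
  shows "(g has_field_derivative g' x) (at x within S)"
proof -
  have derivs': "\<And>n y. y \<in> S \<Longrightarrow> (fs n has_derivative (*) (fs' n y)) (at y within S)"
    using derivs unfolding has_field_derivative_def .
  have close: "\<forall>\<^sub>F n in sequentially. \<forall>y\<in>S. \<forall>h. norm (fs' n y * h - g' y * h) \<le> e * norm h"
    if "e > 0" for e
  proof -
    have "\<forall>\<^sub>F n in sequentially. \<forall>y\<in>S. dist (fs' n y) (g' y) < e"
      using uniform_limitD[OF assms(3) that] .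
    then show ?thesis
    proof (rule eventually_mono, intro ballI allI)
      fix n y and h :: 'a assume "\<forall>y\<in>S. dist (fs' n y) (g' y) < e" "y \<in> S"
      then have "norm (fs' n y - g' y) * norm h \<le> e * norm h"
        by (intro mult_right_mono) (auto simp: dist_norm)
      then show "norm (fs' n y * h - g' y * h) \<le> e * norm h"
        by (simp add: norm_mult left_diff_distrib[symmetric])
    qed
  qed
  obtain G where G: "\<And>y. y \<in> S \<Longrightarrow> (\<lambda>n. fs n y) \<longlonglongrightarrow> G y"
    "\<And>y. y \<in> S \<Longrightarrow> (G has_derivative (*) (g' y)) (at y within S)"
    using has_derivative_sequence[OF assms(1) derivs' close \<open>x \<in> S\<close> pointwise[OF \<open>x \<in> S\<close>]]
    by blast
  have "g y = G y" if "y \<in> S" for y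
    using LIMSEQ_unique[OF pointwise G(1)] that by blast
  from has_derivative_transform[OF \<open>x \<in> S\<close> this G(2)[OF \<open>x \<in> S\<close>]] show ?thesis
    unfolding has_field_derivative_def .
qed

lemma C1_on01_imp_continuous_on:
  assumes "C1_on01 u u'"
  shows "continuous_on {0..1} u"
  using assms DERIV_continuous unfolding C1_on01_def continuous_on_eq_continuous_within by blast

lemma C1_on01_derivative_bound:
  assumes "C1_on01 u u'" "x \<in> {0..1}"
    and modulus: "\<And>x y. x \<in> {0..1} \<Longrightarrow> y \<in> {0..1} \<Longrightarrow> \<bar>u' x - u' y\<bar> \<le> \<bar>F x - F y\<bar>"
    and "\<And>x. x \<in> {0..1} \<Longrightarrow> \<bar>F x\<bar> \<le> D"
  shows "\<bar>u' x\<bar> \<le> \<bar>u 1 - u 0\<bar> + 2 * D"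
proof -
  obtain \<xi> where \<xi>: "\<xi> \<in> {0..1}" "u 1 - u 0 = u' \<xi> * (1 - 0)"
    using mvt_very_simple[of 0 1 u "\<lambda>x. (*) (u' x)"] assms(1)
    unfolding C1_on01_def has_field_derivative_def by auto
  have "\<bar>u' x\<bar> \<le> \<bar>u' \<xi>\<bar> + \<bar>F x - F \<xi>\<bar>"
    using modulus[OF assms(2) \<xi>(1)] by linarith
  also have "\<dots> \<le> \<bar>u 1 - u 0\<bar> + 2 * D"
    using \<xi> assms(2) assms(4)[of x] assms(4)[of \<xi>] by auto
  finally show ?thesis .
qed

lemma C1_on01_subseq_convergent:
  fixes us vs :: "nat \<Rightarrow> real \<Rightarrow> real" and F :: "real \<Rightarrow> real"
  assumes C1: "\<And>n. C1_on01 (us n) (vs n)"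
    and "continuous_on {0..1} F"
    and modulus: "\<And>n x y. x \<in> {0..1} \<Longrightarrow> y \<in> {0..1} \<Longrightarrow> \<bar>vs n x - vs n y\<bar> \<le> \<bar>F x - F y\<bar>"
    and pointwise: "\<And>x. x \<in> {0..1} \<Longrightarrow> (\<lambda>n. us n x) \<longlonglongrightarrow> u x"
  obtains r u' where "strict_mono r" "C1_on01 u u'"
    "uniform_limit {0..1} (\<lambda>k. vs (r k)) u' sequentially"
proof -
  obtain D where "\<forall>y\<in>F ` {0..1}. norm y \<le> D"
    using compact_imp_bounded[OF compact_continuous_image[OF assms(2)]]
    unfolding bounded_iff by auto
  then have D: "\<And>x. x \<in> {0..1} \<Longrightarrow> \<bar>F x\<bar> \<le> D" by auto
  have "convergent (\<lambda>n. us n 1 - us n 0)"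
    using pointwise[of 1] pointwise[of 0] by (auto intro: convergentI tendsto_diff)
  then have "Bseq (\<lambda>n. us n 1 - us n 0)" by (rule convergent_imp_Bseq)
  then obtain K where "\<forall>n. norm (us n 1 - us n 0) \<le> K" by (rule BseqE)
  then have K: "\<And>n. \<bar>us n 1 - us n 0\<bar> \<le> K" by simp
  have "norm (vs n x) \<le> K + 2 * D" if "x \<in> {0..1}" for n x
    using C1_on01_derivative_bound[OF C1 that modulus[where n=n] D] K[of n] by simp
  moreover have "dist (vs n x) (vs n y) \<le> dist (F x) (F y)" if "x \<in> {0..1}" "y \<in> {0..1}" for n x y
    using modulus[OF that] by (simp add: dist_real_def)
  ultimately obtain r :: "nat \<Rightarrow> nat" and u' where r: "strict_mono r" and "continuous_on {0..1} u'"
    and lim: "uniform_limit {0..1} (\<lambda>k. vs (r k)) u' sequentially"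
    by (rule Arzela_Ascoli_common_modulus[OF compact_Icc assms(2)])
  have "(u has_real_derivative u' x) (at x within {0..1})" if "x \<in> {0..1}" for x
  proof (rule has_field_derivative_uniform_limit[OF _ _ lim _ that])
    show "(us (r k) has_real_derivative vs (r k) y) (at y within {0..1})"
      if "y \<in> {0..1}" for k y
      using C1 that unfolding C1_on01_def by blast
    show "(\<lambda>k. us (r k) y) \<longlonglongrightarrow> u y" if "y \<in> {0..1}" for y
      using LIMSEQ_subseq_LIMSEQ[OF pointwise[OF that] r] by (simp add: o_def)
  qed simp
  with \<open>continuous_on {0..1} u'\<close> have "C1_on01 u u'"
    unfolding C1_on01_def by blast
  with r lim show ?thesis using that by blast
qed

lemma Qset_obtain_derivatives:
  assumes "\<And>n. us n \<in> Qset M"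
  obtains vs where "\<And>n. C1_on01 (us n) (vs n)"
    "\<And>n s t. 0 \<le> s \<Longrightarrow> s \<le> t \<Longrightarrow> t \<le> 1 \<Longrightarrow> \<bar>vs n t - vs n s\<bar> \<le> (LINT r:{s..t}|lborel. M r)"
proof -
  from assms have "\<forall>n. \<exists>v. C1_on01 (us n) v \<and>
      (\<forall>s t. 0 \<le> s \<and> s \<le> t \<and> t \<le> 1 \<longrightarrow> \<bar>v t - v s\<bar> \<le> (LINT r:{s..t}|lborel. M r))"
    unfolding Qset_def by blast
  then obtain vs where "\<forall>n. C1_on01 (us n) (vs n) \<and>
      (\<forall>s t. 0 \<le> s \<and> s \<le> t \<and> t \<le> 1 \<longrightarrow> \<bar>vs n t - vs n s\<bar> \<le> (LINT r:{s..t}|lborel. M r))"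
    by (rule exE[OF choice])
  then show ?thesis by (intro that) blast+
qed

lemma Qset_subseq_C1_convergent:
  assumes "set_integrable lborel {0..1} M"
    and "\<And>n. us n \<in> Qset M" "uniform_limit {0..1} us u sequentially"
  obtains r u' vs where "strict_mono r" "C1_on01 u u'" "\<And>n. C1_on01 (us n) (vs n)"
    "\<And>n s t. 0 \<le> s \<Longrightarrow> s \<le> t \<Longrightarrow> t \<le> 1 \<Longrightarrow> \<bar>vs n t - vs n s\<bar> \<le> (LINT x:{s..t}|lborel. M x)"
    "uniform_limit {0..1} (\<lambda>k. vs (r k)) u' sequentially"
proof -
  obtain vs :: "nat \<Rightarrow> real \<Rightarrow> real" where C1: "\<And>n. C1_on01 (us n) (vs n)"
    and bound: "\<And>n s t. 0 \<le> s \<Longrightarrow> s \<le> t \<Longrightarrow> t \<le> 1 \<Longrightarrow>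
      \<bar>vs n t - vs n s\<bar> \<le> (LINT r:{s..t}|lborel. M r)"
    using Qset_obtain_derivatives[of us M, OF assms(2)] by blast
  define F where "F x = integral {0..x} M" for x
  have "continuous_on {0..1} F"
    unfolding F_def
    by (rule indefinite_integral_continuous_1[OF set_borel_integral_eq_integral(1)[OF assms(1)]])
  moreover have "\<bar>vs n x - vs n y\<bar> \<le> \<bar>F x - F y\<bar>" if "x \<in> {0..1}" "y \<in> {0..1}" for n x y
    using bound[of x y n] bound[of y x n] that
      set_integral_Icc_eq_indefinite_integral_diff[OF assms(1), of x y]
      set_integral_Icc_eq_indefinite_integral_diff[OF assms(1), of y x]
    unfolding F_def by (cases "x \<le> y") auto
  ultimately obtain r :: "nat \<Rightarrow> nat" and u' where "strict_mono r" "C1_on01 u u'"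
    "uniform_limit {0..1} (\<lambda>k. vs (r k)) u' sequentially"
    by (rule C1_on01_subseq_convergent[OF C1 _ _ tendsto_uniform_limitI[OF assms(3)]])
  then show ?thesis using that C1 bound by blast
qed

lemma uniform_limit_in_Qset:
  assumes "set_integrable lborel {0..1} M"
    and "\<And>n. us n \<in> Qset M" "uniform_limit {0..1} us u sequentially"
  shows "u \<in> Qset M"
proof -
  obtain r :: "nat \<Rightarrow> nat" and u' and vs :: "nat \<Rightarrow> real \<Rightarrow> real"
    where "strict_mono r" and C1: "C1_on01 u u'" and "\<And>n. C1_on01 (us n) (vs n)"
    and bound: "\<And>n s t. 0 \<le> s \<Longrightarrow> s \<le> t \<Longrightarrow> t \<le> 1 \<Longrightarrow>
      \<bar>vs n t - vs n s\<bar> \<le> (LINT x:{s..t}|lborel. M x)"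
    and lim: "uniform_limit {0..1} (\<lambda>k. vs (r k)) u' sequentially"
    using Qset_subseq_C1_convergent[where us=us, OF assms] by metis
  have "\<bar>u' t - u' s\<bar> \<le> (LINT r:{s..t}|lborel. M r)" if "0 \<le> s" "s \<le> t" "t \<le> 1" for s t
  proof (rule LIMSEQ_le_const2)
    show "(\<lambda>k. \<bar>vs (r k) t - vs (r k) s\<bar>) \<longlonglongrightarrow> \<bar>u' t - u' s\<bar>"
      using tendsto_uniform_limitI[OF lim, of t] tendsto_uniform_limitI[OF lim, of s] that
      by (auto intro!: tendsto_intros)
  qed (use bound that in auto)
  with C1 show ?thesis unfolding Qset_def by blast
qed

lemma restrict_in_Qset:
  assumes "u \<in> Qset M"
  shows "restrict u {0..1} \<in> Qset M"
proof -
  obtain u' where C1: "C1_on01 u u'" and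
    "\<forall>s t. 0 \<le> s \<and> s \<le> t \<and> t \<le> 1 \<longrightarrow> \<bar>u' t - u' s\<bar> \<le> (LINT r:{s..t}|lborel. M r)"
    using assms unfolding Qset_def by blast
  moreover have "C1_on01 (restrict u {0..1}) u'"
    unfolding C1_on01_def
  proof (intro conjI ballI)
    show "(restrict u {0..1} has_real_derivative u' t) (at t within {0..1})"
      if t: "t \<in> {0..1}" for t
      unfolding has_field_derivative_def
      by (rule has_derivative_transform[OF t _ C1[unfolded C1_on01_def has_field_derivative_def,
            THEN conjunct1, rule_format, OF t]]) simp
  qed (use C1 in \<open>simp add: C1_on01_def\<close>)
  ultimately show ?thesis unfolding Qset_def by blast
qed

lemma compactin_topspace_top_of_set:
  assumes "compact S"
  shows "compactin (top_of_set S) (topspace (top_of_set S))"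
  using assms by (simp add: compactin_subtopology)

lemma mspace_C01: "mspace C01 = {f \<in> extensional {0..1}. continuous_on {0..1} f}"
proof -
  note cpt = compactin_topspace_top_of_set[OF compact_Icc[of "0::real" 1]]
  from compactin_mspace_cfunspace[OF cpt, of euclidean_metric] show ?thesis
    unfolding C01_def by (simp add: continuous_map_iff_continuous)
qed

lemma limitin_C01_imp_uniform_limit:
  assumes "limitin (mtopology_of C01) fs f sequentially"
  shows "uniform_limit {0..1} fs f sequentially"
proof -
  interpret C: Metric_space "mspace C01" "mdist C01" by (rule Metric_space_mspace_mdist)
  note cpt = compactin_topspace_top_of_set[OF compact_Icc[of "0::real" 1]]
  have f: "f \<in> mspace C01"
    and lim: "\<And>e. e > 0 \<Longrightarrow> \<exists>N. \<forall>n\<ge>N. fs n \<in> mspace C01 \<and> mdist C01 (fs n) f < e"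
    using assms unfolding mtopology_of_def C.limit_metric_sequentially by blast+
  show ?thesis
    unfolding uniform_limit_sequentially_iff
  proof (intro allI impI)
    fix e :: real assume "e > 0"
    with lim obtain N where N: "\<And>n. n \<ge> N \<Longrightarrow> fs n \<in> mspace C01 \<and> mdist C01 (fs n) f < e"
      by blast
    have "dist (fs n x) (f x) < e" if "n \<ge> N" "x \<in> {0..1}" for n x
      using cfunspace_mdist_lt[OF cpt, of "fs n" euclidean_metric f e x] N[OF that(1)] f that(2)
      unfolding C01_def by simp
    then show "\<exists>N. \<forall>n\<ge>N. \<forall>x\<in>{0..1}. dist (fs n x) (f x) < e" by blast
  qed
qed

lemma closedin_C01_restrict_Qset:
  assumes "set_integrable lborel {0..1} M"
  shows "closedin (mtopology_of C01) ((\<lambda>u. restrict u {0..1}) ` Qset M)"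
proof -
  interpret C: Metric_space "mspace C01" "mdist C01" by (rule Metric_space_mspace_mdist)
  show ?thesis
    unfolding mtopology_of_def C.metric_closedin_iff_sequentially_closed
  proof (intro conjI allI impI)
    show "(\<lambda>u. restrict u {0..1}) ` Qset M \<subseteq> mspace C01"
    proof (rule image_subsetI)
      fix u assume "u \<in> Qset M"
      then obtain u' where "C1_on01 u u'" unfolding Qset_def by blast
      then have "continuous_on {0..1} (restrict u {0..1})"
        by (rule continuous_on_eq[OF C1_on01_imp_continuous_on]) auto
      then show "restrict u {0..1} \<in> mspace C01" unfolding mspace_C01 by simp
    qed
    fix fs l
    assume "range fs \<subseteq> (\<lambda>u. restrict u {0..1}) ` Qset M \<and> limitin C.mtopology fs l sequentially"
    then have range: "range fs \<subseteq> (\<lambda>u. restrict u {0..1}) ` Qset M"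
      and lim: "limitin (mtopology_of C01) fs l sequentially"
      unfolding mtopology_of_def by auto
    have "fs n \<in> Qset M" for n
    proof -
      from range have "fs n \<in> (\<lambda>u. restrict u {0..1}) ` Qset M" by blast
      then obtain v where "v \<in> Qset M" "fs n = restrict v {0..1}" by blast
      then show ?thesis using restrict_in_Qset by simp
    qed
    then have "l \<in> Qset M"
      using uniform_limit_in_Qset[OF assms] limitin_C01_imp_uniform_limit[OF lim] by blast
    moreover have "l \<in> mspace C01"
      using lim unfolding mtopology_of_def by (rule C.limitin_mspace)
    then have "l = restrict l {0..1}"
      unfolding mspace_C01 by (simp add: extensional_restrict[symmetric])
    ultimately show "l \<in> (\<lambda>u. restrict u {0..1}) ` Qset M" by (intro image_eqI)
  qed
qed

theorem lemma5:
  fixes M :: "real \<Rightarrow> real"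
  assumes "set_integrable lborel {0..1} M"
    and "AE r in lborel. r \<in> {0..1} \<longrightarrow> 0 \<le> M r"
  shows "closedin (mtopology_of C01) ((\<lambda>u. restrict u {0..1}) ` Qset M)
    \<and> (\<forall>(us :: nat \<Rightarrow> real \<Rightarrow> real) (u :: real \<Rightarrow> real).
          (\<forall>n. us n \<in> Qset M) \<and> uniform_limit {0..1} us u sequentially \<longrightarrow>
          (\<exists>r u' us'. strict_mono r \<and> C1_on01 u u' \<and> (\<forall>n. C1_on01 (us n) (us' n)) \<and>
             uniform_limit {0..1} (\<lambda>k. us (r k)) u sequentially \<and>
             uniform_limit {0..1} (\<lambda>k. us' (r k)) u' sequentially))"
proof (intro conjI allI impI)
  show "closedin (mtopology_of C01) ((\<lambda>u. restrict u {0..1}) ` Qset M)"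
    using closedin_C01_restrict_Qset[OF assms(1)] .
  fix us :: "nat \<Rightarrow> real \<Rightarrow> real" and u :: "real \<Rightarrow> real"
  assume "(\<forall>n. us n \<in> Qset M) \<and> uniform_limit {0..1} us u sequentially"
  then have Q: "\<And>n. us n \<in> Qset M" and lim: "uniform_limit {0..1} us u sequentially"
    by auto
  obtain r :: "nat \<Rightarrow> nat" and u' and vs :: "nat \<Rightarrow> real \<Rightarrow> real"
    where "strict_mono r" "C1_on01 u u'" "\<And>n. C1_on01 (us n) (vs n)"
    "uniform_limit {0..1} (\<lambda>k. vs (r k)) u' sequentially"
    using Qset_subseq_C1_convergent[where us=us, OF assms(1) Q lim] by metis
  moreover have "uniform_limit {0..1} (\<lambda>k. us (r k)) u sequentially"
    using filterlim_compose[OF lim filterlim_subseq[OF \<open>strict_mono r\<close>]] .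
  ultimately show "\<exists>r u' us'. strict_mono r \<and> C1_on01 u u' \<and> (\<forall>n. C1_on01 (us n) (us' n)) \<and>
      uniform_limit {0..1} (\<lambda>k. us (r k)) u sequentially \<and>
      uniform_limit {0..1} (\<lambda>k. us' (r k)) u' sequentially"
    by blast
qed

end
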